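(* Let $\alpha,\beta,\gamma,x\in\mathbb{N}_0$ with $(\alpha,\beta,\gamma,x)\neq(0,0,0,0)$, let $\lambda$ be a nonnegative integer and $n$ a nonnegative integer. Then $$A^{\lambda,x}_{n+1}(\alpha,\beta,\gamma)=\gamma\, A^{\lambda,x}_n(\alpha,\beta,\gamma+\alpha)+x\lambda\beta\, A^{\lambda+1,x}_n(\alpha,\beta,\gamma+\beta+\alpha).$$
   Context: For a number $t$ and $\alpha$, the generalised factorial is $(t|\alpha)_n=\prod_{j=0}^{n-1}(t-j\alpha)$ for $n\ge 1$ and $(t|\alpha)_0=1$. For parameters $\alpha,\beta,\gamma$, the generalised Stirling numbers $S(n,k,\alpha,\beta,\gamma)$ ($0\le k\le n$) are defined by the polynomial identity $(t|\alpha)_n=\sum_{k=0}^{n}S(n,k,\alpha,\beta,\gamma)\,(t-\gamma|\beta)_k$ in the variable $t$. For a nonnegative integer $\lambda$ put $\binom{k+\lambda-1}{k}=\lambda(\lambda+1)\cdots(\lambda+k-1)/k!$ (equal to $1$ for $k=0$). Define $$A^{\lambda,x}_n(\alpha,\beta,\gamma)=\sum_{k=0}^{n}\binom{k+\lambda-1}{k}(-1)^{n+k}\beta^k k!\,S(n,k,\alpha,-\beta,-\gamma)\,x^k .$$ *)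

theory Defs
  imports Complex_Main
begin

definition gfact :: "real \<Rightarrow> real \<Rightarrow> nat \<Rightarrow> real" where
  "gfact t a n = (\<Prod>j<n. (t - of_nat j * a))"

definition gstirling :: "nat \<Rightarrow> nat \<Rightarrow> real \<Rightarrow> real \<Rightarrow> real \<Rightarrow> real" where
  "gstirling n k a b g =
     (THE c :: nat \<Rightarrow> real. (\<forall>i>n. c i = 0) \<and>
        (\<forall>t::real. gfact t a n = (\<Sum>i\<le>n. c i * gfact (t - g) b i))) k"

text \<open>binom(k+lambda-1, k) = lambda(lambda+1)...(lambda+k-1)/k!\<close>
definition lbinom :: "nat \<Rightarrow> nat \<Rightarrow> real" where
  "lbinom lam k = pochhammer (real lam) k / fact k"

definition Apoly :: "nat \<Rightarrow> real \<Rightarrow> nat \<Rightarrow> real \<Rightarrow> real \<Rightarrow> real \<Rightarrow> real" where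
  "Apoly lam x n a b g =
     (\<Sum>k\<le>n. lbinom lam k * (-1) ^ (n + k) * b ^ k * fact k * gstirling n k a (- b) (- g) * x ^ k)"

end

theory Submission
  imports Defs "HOL-Computational_Algebra.Polynomial"
begin

(* S(n,k,a,b,g) are the coordinates of (t|a)_n in the basis (t-g|b)_k, a basis because its k-th
   element is a monic polynomial of degree k.  From (t|a)_(n+1) = t (t-a|a)_n and
   t (t-g|b)_k = (t-g|b)_(k+1) + (g+kb) (t-g|b)_k one gets a triangular recurrence in n, and
   (y|b)_(k+1) = (y-b|b)_(k+1) + (k+1) b (y-b|b)_k describes how the coordinates change when g is
   shifted by b.  Substituting both into A and reindexing, lambda (lambda+1)_k = (lambda)_(k+1)
   turns the shifted terms into x lambda beta A^(lambda+1). *)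

lemma gfact_0 [simp]: "gfact t a 0 = 1"
  by (simp add: gfact_def)

lemma gfact_Suc_shift: "gfact t a (Suc n) = t * gfact (t - a) a n"
  unfolding gfact_def prod.lessThan_Suc_shift by (simp add: algebra_simps)

lemma times_gfact:
  "t * gfact (t - g) b k = gfact (t - g) b (Suc k) + (g + of_nat k * b) * gfact (t - g) b k"
  by (simp add: gfact_def algebra_simps)

lemma gfact_Suc_eq_shifted:
  "gfact y b (Suc k) = gfact (y - b) b (Suc k) + of_nat (Suc k) * b * gfact (y - b) b k"
  using times_gfact[of y b b k] gfact_Suc_shift[of y b k] by (simp add: algebra_simps)

lemma sum_atMost_Suc_shift_right:
  fixes c f :: "nat \<Rightarrow> 'a::comm_ring_1"
  shows "(\<Sum>k\<le>Suc n. (if k = 0 then 0 else c (k - 1)) * f k) = (\<Sum>k\<le>n. c k * f (Suc k))"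
  by (subst sum.atMost_Suc_shift) simp

definition gfact_poly :: "real \<Rightarrow> real \<Rightarrow> nat \<Rightarrow> real poly" where
  "gfact_poly g b k = (\<Prod>j<k. [:- (g + of_nat j * b), 1:])"

lemma poly_gfact_poly: "poly (gfact_poly g b k) t = gfact (t - g) b k"
  by (simp add: gfact_poly_def gfact_def poly_prod algebra_simps)

lemma degree_gfact_poly: "degree (gfact_poly g b k) = k"
  by (simp add: gfact_poly_def degree_prod_eq_sum_degree)

lemma coeff_gfact_poly_degree: "coeff (gfact_poly g b k) k = 1"
  using lead_coeff_prod[of "\<lambda>j. [:- (g + of_nat j * b), 1:]" "{..<k}"] degree_gfact_poly[of g b k]
  by (simp add: gfact_poly_def)

lemma gfact_basis_independent:
  assumes "\<And>t. (\<Sum>i\<le>n. d i * gfact (t - g) b i) = 0" and "i \<le> n"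
  shows "d i = 0"
  using assms
proof (induction n)
  case 0
  then show ?case by simp
next
  case (Suc n)
  define p where "p = (\<Sum>i\<le>Suc n. smult (d i) (gfact_poly g b i))"
  have "p = 0"
    using Suc.prems(1) poly_all_0_iff_0 by (force simp: p_def poly_sum poly_gfact_poly)
  moreover have "coeff p (Suc n) = d (Suc n)"
    by (simp add: p_def coeff_sum coeff_gfact_poly_degree coeff_eq_0 degree_gfact_poly)
  ultimately have top: "d (Suc n) = 0" by simp
  show ?case
  proof (cases "i = Suc n")
    case False
    with Suc.prems top show ?thesis by (intro Suc.IH) auto
  qed (use top in simp)
qed

definition gfact_expansion :: "nat \<Rightarrow> real \<Rightarrow> real \<Rightarrow> real \<Rightarrow> (nat \<Rightarrow> real) \<Rightarrow> bool" where
  "gfact_expansion n a b g c \<longleftrightarrow>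
     (\<forall>i>n. c i = 0) \<and> (\<forall>t. gfact t a n = (\<Sum>i\<le>n. c i * gfact (t - g) b i))"

lemma gfact_expansion_unique:
  assumes "gfact_expansion n a b g c" and "gfact_expansion n a b g c'"
  shows "c = c'"
proof
  fix k
  have "\<And>t. (\<Sum>i\<le>n. (c i - c' i) * gfact (t - g) b i) = 0"
    using assms by (simp add: gfact_expansion_def algebra_simps sum_subtractf)
  then have "k \<le> n \<Longrightarrow> c k - c' k = 0"
    by (rule gfact_basis_independent)
  then show "c k = c' k"
    using assms by (cases "k \<le> n") (auto simp: gfact_expansion_def)
qed

lemma gfact_expansion_Suc:
  assumes c: "gfact_expansion n a b (g - a) c"
  shows "gfact_expansion (Suc n) a b g (\<lambda>k. (if k = 0 then 0 else c (k - 1)) + (g + of_nat k * b) * c k)"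
  unfolding gfact_expansion_def
proof (intro conjI allI impI)
  fix t
  have c0: "c (Suc n) = 0"
    using c by (simp add: gfact_expansion_def)
  have "gfact t a (Suc n) = t * (\<Sum>k\<le>n. c k * gfact (t - g) b k)"
    using c by (simp add: gfact_expansion_def gfact_Suc_shift)
  also have "\<dots> = (\<Sum>k\<le>n. c k * gfact (t - g) b (Suc k)) + (\<Sum>k\<le>n. (g + of_nat k * b) * c k * gfact (t - g) b k)"
    unfolding sum_distrib_left mult.left_commute[of t] times_gfact by (simp add: sum.distrib algebra_simps)
  also have "\<dots> = (\<Sum>k\<le>Suc n. (if k = 0 then 0 else c (k - 1)) * gfact (t - g) b k)
      + (\<Sum>k\<le>Suc n. (g + of_nat k * b) * c k * gfact (t - g) b k)"
    using c0 by (simp only: sum_atMost_Suc_shift_right) simp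
  finally show "gfact t a (Suc n)
      = (\<Sum>k\<le>Suc n. ((if k = 0 then 0 else c (k - 1)) + (g + of_nat k * b) * c k) * gfact (t - g) b k)"
    by (simp add: distrib_right sum.distrib)
qed (use c in \<open>simp add: gfact_expansion_def\<close>)

lemma gfact_expansion_shift:
  assumes c: "gfact_expansion n a b g c"
  shows "gfact_expansion n a b (g + b) (\<lambda>k. c k + of_nat (Suc k) * b * c (Suc k))"
  unfolding gfact_expansion_def
proof (intro conjI allI impI)
  fix t
  have c0: "c (Suc n) = 0"
    using c by (simp add: gfact_expansion_def)
  have shift: "(\<Sum>k\<le>n. c k * f k) = c 0 * f 0 + (\<Sum>k\<le>n. c (Suc k) * f (Suc k))" for f :: "nat \<Rightarrow> real"
    using c0 by (subst sum.atMost_Suc_shift[symmetric]) simp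
  have "gfact t a n = c 0 + (\<Sum>k\<le>n. c (Suc k) * gfact (t - g) b (Suc k))"
    using c shift by (simp add: gfact_expansion_def)
  also have "\<dots> = c 0 + (\<Sum>k\<le>n. c (Suc k) * gfact (t - (g + b)) b (Suc k))
      + (\<Sum>k\<le>n. of_nat (Suc k) * b * c (Suc k) * gfact (t - (g + b)) b k)"
    by (simp add: gfact_Suc_eq_shifted[of "t - g"] sum.distrib algebra_simps diff_diff_eq)
  also have "c 0 + (\<Sum>k\<le>n. c (Suc k) * gfact (t - (g + b)) b (Suc k))
      = (\<Sum>k\<le>n. c k * gfact (t - (g + b)) b k)"
    using shift by simp
  finally show "gfact t a n = (\<Sum>k\<le>n. (c k + of_nat (Suc k) * b * c (Suc k)) * gfact (t - (g + b)) b k)"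
    by (simp add: sum.distrib distrib_right)
qed (use c in \<open>simp add: gfact_expansion_def\<close>)

lemma gfact_expansion_exists: "\<exists>c. gfact_expansion n a b g c"
proof (induction n arbitrary: g)
  case 0
  show ?case
    by (rule exI[of _ "\<lambda>i. if i = 0 then 1 else 0"]) (simp add: gfact_expansion_def gfact_def)
next
  case (Suc n)
  then show ?case by (meson gfact_expansion_Suc)
qed

lemma gfact_expansion_gstirling: "gfact_expansion n a b g (\<lambda>k. gstirling n k a b g)"
proof -
  have "\<exists>!c. gfact_expansion n a b g c"
    using gfact_expansion_exists gfact_expansion_unique by blast
  then have "gfact_expansion n a b g (THE c. gfact_expansion n a b g c)"
    by (rule theI')
  then show ?thesis
    by (simp add: gstirling_def flip: gfact_expansion_def)
qed

lemma gstirling_eqI: "gfact_expansion n a b g c \<Longrightarrow> gstirling n k a b g = c k"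
  using gfact_expansion_gstirling gfact_expansion_unique by metis

lemma gstirling_eq_0: "n < k \<Longrightarrow> gstirling n k a b g = 0"
  using gfact_expansion_gstirling by (simp add: gfact_expansion_def)

lemma gstirling_Suc:
  "gstirling (Suc n) k a b g = (if k = 0 then 0 else gstirling n (k - 1) a b (g - a))
     + (g + of_nat k * b) * gstirling n k a b (g - a)"
  by (rule gstirling_eqI[OF gfact_expansion_Suc[OF gfact_expansion_gstirling]])

lemma gstirling_shift:
  "gstirling n k a b (g + b) = gstirling n k a b g + of_nat (Suc k) * b * gstirling n (Suc k) a b g"
  by (rule gstirling_eqI[OF gfact_expansion_shift[OF gfact_expansion_gstirling]])

definition Asum :: "'a::comm_ring_1 \<Rightarrow> 'a \<Rightarrow> nat \<Rightarrow> (nat \<Rightarrow> 'a) \<Rightarrow> 'a" where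
  "Asum l y n s = (\<Sum>k\<le>n. pochhammer l k * (-1) ^ (n + k) * y ^ k * s k)"

lemma Apoly_eq_Asum:
  "Apoly lam x n a b g = Asum (real lam) (b * x) n (\<lambda>k. gstirling n k a (- b) (- g))"
  by (simp add: Apoly_def Asum_def lbinom_def power_mult_distrib mult_ac)

lemma Asum_add: "Asum l y n (\<lambda>k. s k + r k) = Asum l y n s + Asum l y n r"
  by (simp add: Asum_def sum.distrib algebra_simps)

lemma Asum_cmult: "Asum l y n (\<lambda>k. c * s k) = c * Asum l y n s"
  by (simp add: Asum_def sum_distrib_left mult_ac)

lemma Asum_shift_right:
  "Asum l y (Suc n) (\<lambda>k. if k = 0 then 0 else s (k - 1)) = y * l * Asum (l + 1) y n s"
  unfolding Asum_def by (subst sum.atMost_Suc_shift) (simp add: sum_distrib_left pochhammer_rec mult_ac)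

lemma Asum_Suc_eq_neg:
  assumes "s (Suc n) = 0"
  shows "Asum l y (Suc n) s = - Asum l y n s"
  using assms by (simp add: Asum_def sum_negf)

lemma Asum_times_index:
  assumes "s (Suc n) = 0"
  shows "Asum l y n (\<lambda>k. of_nat k * s k) = - y * l * Asum (l + 1) y n (\<lambda>k. of_nat (Suc k) * s (Suc k))"
proof -
  have "Asum l y n (\<lambda>k. of_nat k * s k) = - Asum l y (Suc n) (\<lambda>k. of_nat k * s k)"
    using assms by (simp add: Asum_Suc_eq_neg)
  also have "Asum l y (Suc n) (\<lambda>k. of_nat k * s k)
      = Asum l y (Suc n) (\<lambda>k. if k = 0 then 0 else of_nat (Suc (k - 1)) * s (Suc (k - 1)))"
    unfolding Asum_def by (intro sum.cong) auto
  finally show ?thesis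
    using Asum_shift_right[of l y n "\<lambda>k. of_nat (Suc k) * s (Suc k)"] by simp
qed

lemma Asum_recurrence:
  assumes "s (Suc n) = 0"
  shows "Asum l y (Suc n) (\<lambda>k. (if k = 0 then 0 else s (k - 1)) + (g + of_nat k * b) * s k)
       = - g * Asum l y n s + y * l * Asum (l + 1) y n (\<lambda>k. s k + of_nat (Suc k) * b * s (Suc k))"
proof -
  have "Asum l y (Suc n) (\<lambda>k. (g + of_nat k * b) * s k) = - Asum l y n (\<lambda>k. g * s k + b * (of_nat k * s k))"
    using assms by (subst Asum_Suc_eq_neg) (simp_all add: algebra_simps)
  then show ?thesis
    using assms by (simp add: Asum_add Asum_cmult Asum_shift_right Asum_times_index algebra_simps)
qed

theorem theorem2:
  fixes \<alpha> \<beta> \<gamma> x lam n :: nat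
  assumes "(\<alpha>, \<beta>, \<gamma>, x) \<noteq> (0, 0, 0, 0)"
  shows "Apoly lam (real x) (Suc n) (real \<alpha>) (real \<beta>) (real \<gamma>)
       = real \<gamma> * Apoly lam (real x) n (real \<alpha>) (real \<beta>) (real \<gamma> + real \<alpha>)
         + real x * real lam * real \<beta> *
             Apoly (lam + 1) (real x) n (real \<alpha>) (real \<beta>) (real \<gamma> + real \<beta> + real \<alpha>)"
proof -
  define s where "s k = gstirling n k \<alpha> (- real \<beta>) (- (real \<gamma> + real \<alpha>))" for k
  have s_vanishes: "s (Suc n) = 0"
    by (simp add: s_def gstirling_eq_0)
  have s_Suc: "gstirling (Suc n) k \<alpha> (- real \<beta>) (- real \<gamma>)
      = (if k = 0 then 0 else s (k - 1)) + (- real \<gamma> + of_nat k * - real \<beta>) * s k" for k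
    using gstirling_Suc[of n k \<alpha> "- real \<beta>" "- real \<gamma>"] by (simp add: s_def)
  have s_shift: "gstirling n k \<alpha> (- real \<beta>) (- (real \<gamma> + real \<beta> + real \<alpha>))
      = s k + of_nat (Suc k) * - real \<beta> * s (Suc k)" for k
    using gstirling_shift[of n k \<alpha> "- real \<beta>" "- (real \<gamma> + real \<alpha>)"] by (simp add: s_def algebra_simps)
  have "Apoly lam (real x) (Suc n) (real \<alpha>) (real \<beta>) (real \<gamma>) = Asum (real lam) (real \<beta> * real x) (Suc n)
      (\<lambda>k. (if k = 0 then 0 else s (k - 1)) + (- real \<gamma> + of_nat k * - real \<beta>) * s k)"
    by (simp only: Apoly_eq_Asum s_Suc)
  also have "\<dots> = real \<gamma> * Asum (real lam) (real \<beta> * real x) n s + real \<beta> * real x * real lam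
      * Asum (real lam + 1) (real \<beta> * real x) n (\<lambda>k. s k + of_nat (Suc k) * - real \<beta> * s (Suc k))"
    using Asum_recurrence[where s = s and g = "- real \<gamma>" and b = "- real \<beta>", OF s_vanishes]
    by (simp only: minus_minus)
  finally show ?thesis
    unfolding Apoly_eq_Asum s_shift s_def[symmetric] by (simp add: mult_ac add.commute)
qed

end
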